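(* Let $\Gamma$ be a countable group and $M=L(\Gamma)$ with canonical unitaries $\{u_\gamma\}_{\gamma\in\Gamma}$ and trace $\tau$. Let $\Sigma\subseteq\Gamma$ be a subset and $\mathcal S\subseteq (M)_1$ a subset of the unit ball of $M$. If there exist $x,y\in M$ such that $h_\Sigma(x\mathcal S y)>0$, then there is a finite subset $F\subset\Gamma$ such that $h_{F\Sigma F}(\mathcal S)>0$. In particular, for every unitary $u\in\mathcal U(M)$ we have $h_\Gamma(\mathcal S)>0$ if and only if $h_\Gamma(u\mathcal S u^* )>0$.
   Context: For a subset $\Omega\subseteq\Gamma$ and $z\in L(\Gamma)$, the height of $z$ along $\Omega$ is $h_\Omega(z)=\sup_{\gamma\in\Omega}|\tau(zu_\gamma)|$, and for a subset $\mathcal T\subseteq L(\Gamma)$, $h_\Omega(\mathcal T)=\inf_{z\in\mathcal T}h_\Omega(z)$. Here $x\mathcal S y=\{xsy: s\in\mathcal S\}$, $F\Sigma F=\{f\sigma f': f,f'\in F,\sigma\in\Sigma\}$, and $u\mathcal S u^*=\{usu^*:s\in\mathcal S\}$. *)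

theory Defs
  imports "HOL-Analysis.Analysis" "HOL-Library.Countable"
begin

text \<open>The group von Neumann algebra L(Gamma) of a countable (not necessarily abelian)
group, written additively via the type class group_add.  An element x of L(Gamma) is
identified with its Fourier coefficient function x = x delta_e in l2(Gamma); x acts on
l2(Gamma) by left convolution, and L(Gamma) consists exactly of those l2 functions whose
left convolution operator is bounded on l2(Gamma).\<close>

definition l2 :: "('g \<Rightarrow> complex) \<Rightarrow> bool" where
  "l2 f \<longleftrightarrow> (\<lambda>g. (norm (f g))\<^sup>2) summable_on UNIV"

definition l2norm :: "('g \<Rightarrow> complex) \<Rightarrow> real" where
  "l2norm f = sqrt (\<Sum>\<^sub>\<infinity>g. (norm (f g))\<^sup>2)"

definition conv :: "('g::group_add \<Rightarrow> complex) \<Rightarrow> ('g \<Rightarrow> complex) \<Rightarrow> 'g \<Rightarrow> complex" where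
  "conv f h = (\<lambda>g. \<Sum>\<^sub>\<infinity>k. f k * h (- k + g))"

definition LG :: "('g::group_add \<Rightarrow> complex) set" where
  "LG = {x. l2 x \<and> (\<exists>C. \<forall>\<xi>. l2 \<xi> \<longrightarrow> l2 (conv x \<xi>) \<and> l2norm (conv x \<xi>) \<le> C * l2norm \<xi>)}"

definition LG_ball :: "('g::group_add \<Rightarrow> complex) set" where
  "LG_ball = {x \<in> LG. \<forall>\<xi>. l2 \<xi> \<longrightarrow> l2norm (conv x \<xi>) \<le> l2norm \<xi>}"

definition cu :: "'g::group_add \<Rightarrow> 'g \<Rightarrow> complex" where
  "cu \<gamma> = (\<lambda>g. if g = \<gamma> then 1 else 0)"

definition adj :: "('g::group_add \<Rightarrow> complex) \<Rightarrow> 'g \<Rightarrow> complex" where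
  "adj x = (\<lambda>g. cnj (x (- g)))"

definition tau :: "('g::group_add \<Rightarrow> complex) \<Rightarrow> complex" where
  "tau x = x 0"

definition unitary_LG :: "('g::group_add \<Rightarrow> complex) \<Rightarrow> bool" where
  "unitary_LG u \<longleftrightarrow> u \<in> LG \<and> conv (adj u) u = cu 0 \<and> conv u (adj u) = cu 0"

text \<open>Heights (valued in [0,\<infinity>], so that sup over the empty set is 0 and inf over
the empty set is \<infinity>).\<close>
definition height :: "'g::group_add set \<Rightarrow> ('g \<Rightarrow> complex) \<Rightarrow> ennreal" where
  "height \<Omega> z = (SUP \<gamma>\<in>\<Omega>. ennreal (cmod (tau (conv z (cu \<gamma>)))))"

definition height_set :: "'g::group_add set \<Rightarrow> ('g \<Rightarrow> complex) set \<Rightarrow> ennreal" where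
  "height_set \<Omega> T = (INF z\<in>T. height \<Omega> z)"

definition sandwich :: "('g::group_add \<Rightarrow> complex) \<Rightarrow> ('g \<Rightarrow> complex) set \<Rightarrow> ('g \<Rightarrow> complex) \<Rightarrow> ('g \<Rightarrow> complex) set" where
  "sandwich x S y = (\<lambda>s. conv (conv x s) y) ` S"

definition FSF :: "'g::group_add set \<Rightarrow> 'g set \<Rightarrow> 'g set" where
  "FSF F \<Sigma> = {f + \<sigma> + f' | f \<sigma> f'. f \<in> F \<and> \<sigma> \<in> \<Sigma> \<and> f' \<in> F}"

end

theory Submission
  imports Defs
begin

text \<open>Truncate \<open>x\<close> and \<open>y\<close> to finite sets \<open>F1\<close>, \<open>F2\<close> with small \<open>l\<^sup>2\<close>-errors. Since
  \<open>\<tau>(z u\<^sub>\<gamma>) = z(-\<gamma>)\<close> and every \<open>s \<in> S\<close> has \<open>l\<^sup>2\<close>-norm at most 1, the coefficient \<open>(x s y)(-\<gamma>)\<close>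
  then differs little from \<open>\<Sum>\<^sub>a\<^sub>\<in>\<^sub>F\<^sub>1 \<Sum>\<^sub>b\<^sub>\<in>\<^sub>F\<^sub>2 x(a) s(-(b + \<gamma> + a)) y(b)\<close>, so a uniform lower
  bound on the former forces a uniform lower bound \<open>c\<close> on some \<open>|s(-(b + \<gamma> + a))| = |\<tau>(s u\<^bsub>b+\<gamma>+a\<^esub>)|\<close>,
  with \<open>b + \<gamma> + a \<in> F \<Sigma> F\<close> for \<open>F = F1 \<union> F2\<close>. For a unitary \<open>u\<close> this applies to the pairs
  \<open>(u, u\<^sup>*)\<close> and \<open>(u\<^sup>*, u)\<close>; the latter undoes the conjugation because convolution is associative
  on bounded elements, \<open>u\<^sup>*(u s u\<^sup>*)u = s\<close>.\<close>

lemma has_sum_sum: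
  fixes f :: "'i \<Rightarrow> 'a \<Rightarrow> 'b::topological_comm_monoid_add"
  assumes "finite I" "\<And>i. i \<in> I \<Longrightarrow> (f i has_sum s i) A"
  shows "((\<lambda>x. \<Sum>i\<in>I. f i x) has_sum (\<Sum>i\<in>I. s i)) A"
  using assms by (induction I rule: finite_induct) (auto intro: has_sum_add)

lemma infsum_sum:
  fixes f :: "'i \<Rightarrow> 'a \<Rightarrow> 'b::{topological_comm_monoid_add, t2_space}"
  assumes "finite I" "\<And>i. i \<in> I \<Longrightarrow> f i summable_on A"
  shows "(\<Sum>\<^sub>\<infinity>x\<in>A. \<Sum>i\<in>I. f i x) = (\<Sum>i\<in>I. \<Sum>\<^sub>\<infinity>x\<in>A. f i x)"
  using has_sum_sum[OF assms(1), where f=f and s="\<lambda>i. infsum (f i) A" and A=A] assms(2)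
  by (simp add: infsumI)

section \<open>Square-summable functions\<close>

lemma l2norm_sq: "(l2norm f)\<^sup>2 = (\<Sum>\<^sub>\<infinity>k. (norm (f k))\<^sup>2)"
  by (simp add: l2norm_def infsum_nonneg)

lemma l2norm_nonneg: "l2norm f \<ge> 0"
  by (simp add: l2norm_def infsum_nonneg)

lemma L2_set_norm_le_l2norm:
  assumes "l2 f" "finite G"
  shows "L2_set (\<lambda>k. norm (f k)) G \<le> l2norm f"
  using assms unfolding L2_set_def l2norm_def l2_def
  by (intro real_sqrt_le_mono finite_sum_le_infsum) auto

lemma l2I_L2_set_bounded:
  assumes bounded: "\<And>G. finite G \<Longrightarrow> L2_set (\<lambda>k. norm (f k)) G \<le> K"
  shows "l2 f" and "l2norm f \<le> K"
proof -
  have sums: "(\<Sum>k\<in>G. (norm (f k))\<^sup>2) \<le> K\<^sup>2" if "finite G" for G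
  proof -
    have "(\<Sum>k\<in>G. (norm (f k))\<^sup>2) = (L2_set (\<lambda>k. norm (f k)) G)\<^sup>2"
      by (simp add: L2_set_def sum_nonneg)
    also have "\<dots> \<le> K\<^sup>2"
      using bounded[OF that] by (intro power_mono) auto
    finally show ?thesis .
  qed
  show l2: "l2 f"
    unfolding l2_def
    by (rule nonneg_bdd_above_summable_on) (use sums in \<open>auto intro!: bdd_aboveI2\<close>)
  have "(l2norm f)\<^sup>2 \<le> K\<^sup>2"
    unfolding l2norm_sq using l2 unfolding l2_def
    by (rule infsum_le_finite_sums) (use sums in auto)
  moreover have "K \<ge> 0"
    using bounded[of "{}"] by simp
  ultimately show "l2norm f \<le> K"
    by (rule power2_le_imp_le)
qed

lemma
  assumes "l2 f" "l2 h"
  shows l2_mult_abs_summable: "(\<lambda>k. norm (f k * h k)) summable_on UNIV"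
    and norm_infsum_mult_le: "norm (\<Sum>\<^sub>\<infinity>k. f k * h k) \<le> l2norm f * l2norm h"
proof -
  have finite_sums: "(\<Sum>k\<in>G. norm (f k * h k)) \<le> l2norm f * l2norm h" if "finite G" for G
  proof -
    have "(\<Sum>k\<in>G. norm (f k * h k)) \<le> L2_set (\<lambda>k. norm (f k)) G * L2_set (\<lambda>k. norm (h k)) G"
      using L2_set_mult_ineq[where f="\<lambda>k. norm (f k)" and g="\<lambda>k. norm (h k)" and A=G] by (simp add: norm_mult)
    also have "\<dots> \<le> l2norm f * l2norm h"
      using assms that by (intro mult_mono L2_set_norm_le_l2norm l2norm_nonneg L2_set_nonneg)
    finally show ?thesis .
  qed
  show abs_summable: "(\<lambda>k. norm (f k * h k)) summable_on UNIV"
    by (rule nonneg_bdd_above_summable_on) (use finite_sums in \<open>auto intro!: bdd_aboveI2\<close>)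
  have "(\<Sum>\<^sub>\<infinity>k. norm (f k * h k)) \<le> l2norm f * l2norm h"
    by (rule infsum_le_finite_sums[OF abs_summable]) (use finite_sums in auto)
  then show "norm (\<Sum>\<^sub>\<infinity>k. f k * h k) \<le> l2norm f * l2norm h"
    using norm_infsum_bound[OF abs_summable] by linarith
qed

lemma
  assumes "bij p"
  shows l2_reindex: "l2 (\<lambda>k. f (p k)) \<longleftrightarrow> l2 f"
    and l2norm_reindex: "l2norm (\<lambda>k. f (p k)) = l2norm f"
  using summable_on_reindex_bij_betw[OF assms, of "\<lambda>k. (norm (f k))\<^sup>2"]
    infsum_reindex_bij_betw[OF assms, of "\<lambda>k. (norm (f k))\<^sup>2"]
  by (simp_all add: l2_def l2norm_def)

lemma l2_cnj [simp]: "l2 (\<lambda>k. cnj (f k)) \<longleftrightarrow> l2 f"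
  and l2norm_cnj [simp]: "l2norm (\<lambda>k. cnj (f k)) = l2norm f"
  by (simp_all add: l2_def l2norm_def)

lemma
  assumes "finite F" "\<And>k. k \<notin> F \<Longrightarrow> f k = 0"
  shows l2_finite_support: "l2 f"
    and l2norm_finite_support: "l2norm f = L2_set (\<lambda>k. norm (f k)) F"
proof -
  have "(\<lambda>k. (norm (f k))\<^sup>2) summable_on UNIV \<longleftrightarrow> (\<lambda>k. (norm (f k))\<^sup>2) summable_on F"
    by (rule summable_on_cong_neutral) (use assms(2) in auto)
  then show "l2 f"
    using assms(1) by (simp add: l2_def)
  have "(\<Sum>\<^sub>\<infinity>k. (norm (f k))\<^sup>2) = (\<Sum>\<^sub>\<infinity>k\<in>F. (norm (f k))\<^sup>2)"
    by (rule infsum_cong_neutral) (use assms(2) in auto)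
  then show "l2norm f = L2_set (\<lambda>k. norm (f k)) F"
    using assms(1) by (simp add: l2norm_def L2_set_def)
qed

lemma l2_mono: "l2 f \<Longrightarrow> (\<And>k. norm (h k) \<le> norm (f k)) \<Longrightarrow> l2 h"
  unfolding l2_def by (erule summable_on_comparison_test) (auto intro: power_mono)

lemma l2_restrict: "l2 f \<Longrightarrow> l2 (\<lambda>k. if k \<in> F then f k else 0)"
  and l2_restrict_compl: "l2 f \<Longrightarrow> l2 (\<lambda>k. if k \<in> F then 0 else f k)"
  by (erule l2_mono; simp)+

lemma l2_tail_small:
  assumes "l2 f" "\<epsilon> > 0"
  obtains F where "finite F" "l2norm (\<lambda>k. if k \<in> F then 0 else f k) < \<epsilon>"
proof -
  have summable: "(\<lambda>k. (norm (f k))\<^sup>2) summable_on UNIV"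
    using assms(1) by (simp add: l2_def)
  have "((\<lambda>F. \<Sum>k\<in>F. (norm (f k))\<^sup>2) \<longlongrightarrow> (l2norm f)\<^sup>2) (finite_subsets_at_top UNIV)"
    unfolding l2norm_sq using summable by (rule infsum_tendsto)
  then have "\<forall>\<^sub>F F in finite_subsets_at_top UNIV. dist (\<Sum>k\<in>F. (norm (f k))\<^sup>2) ((l2norm f)\<^sup>2) < \<epsilon>\<^sup>2"
    using assms(2) by (intro tendstoD) auto
  then obtain F where F: "finite F" "dist (\<Sum>k\<in>F. (norm (f k))\<^sup>2) ((l2norm f)\<^sup>2) < \<epsilon>\<^sup>2"
    unfolding eventually_finite_subsets_at_top by blast
  have "(l2norm (\<lambda>k. if k \<in> F then 0 else f k))\<^sup>2 = (\<Sum>\<^sub>\<infinity>k\<in>UNIV - F. (norm (f k))\<^sup>2)"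
    unfolding l2norm_sq by (rule infsum_cong_neutral) auto
  also have "\<dots> = (l2norm f)\<^sup>2 - (\<Sum>k\<in>F. (norm (f k))\<^sup>2)"
    unfolding l2norm_sq using F(1) summable by (subst infsum_Diff) auto
  also have "\<dots> < \<epsilon>\<^sup>2"
    using F(2) by (simp add: dist_real_def)
  finally have "l2norm (\<lambda>k. if k \<in> F then 0 else f k) < \<epsilon>"
    using assms(2) by (auto intro: power_less_imp_less_base)
  with F(1) show thesis by (rule that)
qed

section \<open>Convolution\<close>

lemma bij_minus_plus: "bij (\<lambda>k::'g::group_add. -k + g)"
  using bij_comp[OF bij_uminus bij_plus_right[of g]] by (simp add: comp_def)

lemma
  fixes h :: "'g::group_add \<Rightarrow> complex"
  shows l2_reflect_translate: "l2 (\<lambda>k. h (-k + g)) \<longleftrightarrow> l2 h"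
    and l2norm_reflect_translate: "l2norm (\<lambda>k. h (-k + g)) = l2norm h"
  by (rule l2_reindex[OF bij_minus_plus], rule l2norm_reindex[OF bij_minus_plus])

lemma l2_translate: "l2 (\<lambda>k. h (k + g)) \<longleftrightarrow> l2 (h :: 'g::group_add \<Rightarrow> complex)"
  by (rule l2_reindex[OF bij_plus_right])

lemma
  fixes f h :: "'g::group_add \<Rightarrow> complex"
  assumes "l2 f" "l2 h"
  shows conv_summable: "(\<lambda>k. f k * h (-k + g)) summable_on UNIV"
    and norm_conv_le: "norm (conv f h g) \<le> l2norm f * l2norm h"
  using abs_summable_summable[OF l2_mult_abs_summable] norm_infsum_mult_le[of f "\<lambda>k. h (-k + g)"]
    assms l2_reflect_translate[of h g] l2norm_reflect_translate[of h g]
  by (auto simp: conv_def)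

lemma conv_altdef: "conv f h g = (\<Sum>\<^sub>\<infinity>b. f (g + -b) * h b)"
  unfolding conv_def
  by (rule infsum_reindex_bij_witness[where j="\<lambda>k. -k + g" and i="\<lambda>b. g + -b"])
     (simp_all add: add.assoc minus_add)

lemma conv_add_left:
  assumes "l2 f1" "l2 f2" "l2 h"
  shows "conv (\<lambda>k. f1 k + f2 k) h g = conv f1 h g + conv f2 h g"
  unfolding conv_def
  using infsum_add[OF conv_summable[OF assms(1,3)] conv_summable[OF assms(2,3)]]
  by (simp add: distrib_right)

lemma conv_add_right:
  assumes "l2 f" "l2 h1" "l2 h2"
  shows "conv f (\<lambda>k. h1 k + h2 k) g = conv f h1 g + conv f h2 g"
  unfolding conv_def
  using infsum_add[OF conv_summable[OF assms(1,2)] conv_summable[OF assms(1,3)]]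
  by (simp add: distrib_left)

lemma conv_finite_support_left:
  assumes "finite F" "\<And>k. k \<notin> F \<Longrightarrow> f k = 0"
  shows "conv f h g = (\<Sum>a\<in>F. f a * h (-a + g))"
proof -
  have "conv f h g = (\<Sum>\<^sub>\<infinity>a\<in>F. f a * h (-a + g))"
    unfolding conv_def by (rule infsum_cong_neutral) (use assms(2) in auto)
  then show ?thesis
    using assms(1) by simp
qed

lemma conv_finite_support_right:
  assumes "finite F" "\<And>k. k \<notin> F \<Longrightarrow> h k = 0"
  shows "conv f h g = (\<Sum>b\<in>F. f (g + -b) * h b)"
proof -
  have "conv f h g = (\<Sum>\<^sub>\<infinity>b\<in>F. f (g + -b) * h b)"
    unfolding conv_altdef by (rule infsum_cong_neutral) (use assms(2) in auto)
  then show ?thesis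
    using assms(1) by simp
qed

lemma conv_cu_right: "conv z (cu \<gamma>) g = z (g + -\<gamma>)"
  by (subst conv_finite_support_right[of "{\<gamma>}"]) (auto simp: cu_def)

lemma conv_cu0_right [simp]: "conv z (cu 0) = z"
  by (simp add: conv_cu_right fun_eq_iff)

lemma conv_cu0_left [simp]: "conv (cu 0) z = z"
  by (rule ext, subst conv_finite_support_left[of "{0}"]) (auto simp: cu_def)

lemma tau_conv_cu: "tau (conv z (cu \<gamma>)) = z (-\<gamma>)"
  by (simp add: tau_def conv_cu_right)

lemma l2_cu: "l2 (cu \<gamma>)"
  by (rule l2_finite_support[of "{\<gamma>}"]) (auto simp: cu_def)

lemma l2norm_cu: "l2norm (cu \<gamma>) = 1"
  by (subst l2norm_finite_support[of "{\<gamma>}"]) (auto simp: cu_def)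

lemma
  fixes x :: "'g::group_add \<Rightarrow> complex"
  shows l2_adj [simp]: "l2 (adj x) \<longleftrightarrow> l2 x"
    and l2norm_adj [simp]: "l2norm (adj x) = l2norm x"
  unfolding adj_def
  using l2_reindex[OF bij_uminus, of "\<lambda>k. cnj (x k)"] l2norm_reindex[OF bij_uminus, of "\<lambda>k. cnj (x k)"]
  by simp_all

lemma conv_eq_adj_conv_adj: "conv \<xi> r = adj (conv (adj r) (adj \<xi>))"
proof
  fix k
  have "conv \<xi> r k = (\<Sum>\<^sub>\<infinity>m. r (-m) * \<xi> (k + m))"
    unfolding conv_def
    by (rule infsum_reindex_bij_witness[where j="\<lambda>j. -k + j" and i="\<lambda>m. k + m"])
       (simp_all add: add.assoc[symmetric] minus_add mult.commute)
  also have "\<dots> = adj (conv (adj r) (adj \<xi>)) k"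
    unfolding adj_def conv_def infsum_cnj[symmetric] by (simp add: minus_add)
  finally show "conv \<xi> r k = adj (conv (adj r) (adj \<xi>)) k" .
qed

section \<open>Bounded convolution operators\<close>

definition lconv_bounded :: "('g::group_add \<Rightarrow> complex) \<Rightarrow> real \<Rightarrow> bool" where
  "lconv_bounded a C \<longleftrightarrow> (\<forall>\<xi>. l2 \<xi> \<longrightarrow> l2 (conv a \<xi>) \<and> l2norm (conv a \<xi>) \<le> C * l2norm \<xi>)"

definition rconv_bounded :: "('g::group_add \<Rightarrow> complex) \<Rightarrow> real \<Rightarrow> bool" where
  "rconv_bounded c C \<longleftrightarrow> (\<forall>\<xi>. l2 \<xi> \<longrightarrow> l2 (conv \<xi> c) \<and> l2norm (conv \<xi> c) \<le> C * l2norm \<xi>)"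

lemma lconv_boundedD:
  "lconv_bounded a C \<Longrightarrow> l2 \<xi> \<Longrightarrow> l2 (conv a \<xi>)"
  "lconv_bounded a C \<Longrightarrow> l2 \<xi> \<Longrightarrow> l2norm (conv a \<xi>) \<le> C * l2norm \<xi>"
  by (simp_all add: lconv_bounded_def)

lemma rconv_boundedD:
  "rconv_bounded c C \<Longrightarrow> l2 \<xi> \<Longrightarrow> l2 (conv \<xi> c)"
  "rconv_bounded c C \<Longrightarrow> l2 \<xi> \<Longrightarrow> l2norm (conv \<xi> c) \<le> C * l2norm \<xi>"
  by (simp_all add: rconv_bounded_def)

lemma lconv_bounded_mono:
  assumes "lconv_bounded a C" "C \<le> C'"
  shows "lconv_bounded a C'"
  using assms order_trans[OF _ mult_right_mono[OF \<open>C \<le> C'\<close> l2norm_nonneg]]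
  unfolding lconv_bounded_def by blast

lemma conv_adj_duality:
  fixes x \<xi> \<eta> :: "'g::group_add \<Rightarrow> complex"
  assumes x: "l2 x" and \<xi>: "l2 \<xi>" and G: "finite G" and \<eta>: "\<And>k. k \<notin> G \<Longrightarrow> \<eta> k = 0"
  shows "(\<Sum>g\<in>G. conv (adj x) \<xi> g * cnj (\<eta> g)) = (\<Sum>\<^sub>\<infinity>m. \<xi> m * cnj (conv x \<eta> m))"
proof -
  have shifted: "l2 (\<lambda>m. cnj (x (m + -g)))" for g
    using x l2_translate[of x "-g"] by simp
  have summable: "(\<lambda>m. \<xi> m * cnj (x (m + -g)) * cnj (\<eta> g)) summable_on UNIV" for g
    by (rule summable_on_cmult_left, rule abs_summable_summable, rule l2_mult_abs_summable[OF \<xi> shifted])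
  have "conv (adj x) \<xi> g = (\<Sum>\<^sub>\<infinity>m. \<xi> m * cnj (x (m + -g)))" for g
    unfolding conv_def adj_def
    by (rule infsum_reindex_bij_witness[where j="\<lambda>k. -k + g" and i="\<lambda>m. g + -m"])
       (simp_all add: add.assoc minus_add mult.commute)
  then have "(\<Sum>g\<in>G. conv (adj x) \<xi> g * cnj (\<eta> g))
      = (\<Sum>g\<in>G. \<Sum>\<^sub>\<infinity>m. \<xi> m * cnj (x (m + -g)) * cnj (\<eta> g))"
    using summable by (simp add: infsum_cmult_left')
  also have "\<dots> = (\<Sum>\<^sub>\<infinity>m. \<Sum>g\<in>G. \<xi> m * cnj (x (m + -g)) * cnj (\<eta> g))"
    using summable by (intro infsum_sum[symmetric] G)
  also have "\<dots> = (\<Sum>\<^sub>\<infinity>m. \<xi> m * cnj (conv x \<eta> m))"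
    by (simp add: conv_finite_support_right[OF G \<eta>] sum_distrib_left mult.assoc)
  finally show ?thesis .
qed

text \<open>Duality: pairing \<open>v = x\<^sup>* \<xi>\<close> with its truncation \<open>\<eta>\<close> to a finite set gives
  \<open>\<parallel>\<eta>\<parallel>\<^sup>2 = \<langle>v, \<eta>\<rangle> = \<langle>\<xi>, x \<eta>\<rangle> \<le> C \<parallel>\<xi>\<parallel> \<parallel>\<eta>\<parallel>\<close>.\<close>

lemma lconv_bounded_adj:
  fixes x :: "'g::group_add \<Rightarrow> complex"
  assumes x: "l2 x" "lconv_bounded x C" and C: "C \<ge> 0"
  shows "lconv_bounded (adj x) C"
  unfolding lconv_bounded_def
proof (intro allI impI)
  fix \<xi> :: "'g \<Rightarrow> complex"
  assume \<xi>: "l2 \<xi>"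
  define v where "v = conv (adj x) \<xi>"
  have "L2_set (\<lambda>k. norm (v k)) G \<le> C * l2norm \<xi>" if G: "finite G" for G
  proof -
    define \<eta> where "\<eta> = (\<lambda>g. if g \<in> G then v g else 0)"
    define Q where "Q = L2_set (\<lambda>k. norm (v k)) G"
    have \<eta>_support: "\<And>k. k \<notin> G \<Longrightarrow> \<eta> k = 0"
      by (simp add: \<eta>_def)
    have l2_\<eta>: "l2 \<eta>"
      using G \<eta>_support by (rule l2_finite_support)
    have "l2norm \<eta> = Q"
      unfolding Q_def by (subst l2norm_finite_support[OF G \<eta>_support]) (auto simp: \<eta>_def intro: L2_set_cong)
    have "complex_of_real (\<Sum>g\<in>G. (norm (v g))\<^sup>2) = (\<Sum>g\<in>G. v g * cnj (\<eta> g))"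
      unfolding of_real_sum by (rule sum.cong) (simp_all add: \<eta>_def complex_norm_square del: of_real_power)
    then have "Q * Q = norm (\<Sum>g\<in>G. v g * cnj (\<eta> g))"
      by (metis Q_def L2_set_def norm_of_real sum_nonneg zero_le_power2 real_sqrt_mult_self abs_of_nonneg)
    also have "\<dots> = norm (\<Sum>\<^sub>\<infinity>m. \<xi> m * cnj (conv x \<eta> m))"
      using conv_adj_duality[OF x(1) \<xi> G \<eta>_support] by (simp add: v_def)
    also have "\<dots> \<le> l2norm \<xi> * l2norm (conv x \<eta>)"
      using norm_infsum_mult_le[OF \<xi>, of "\<lambda>m. cnj (conv x \<eta> m)"]
        lconv_boundedD(1)[OF x(2) l2_\<eta>]
      by simp
    also have "\<dots> \<le> l2norm \<xi> * (C * Q)"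
      using lconv_boundedD(2)[OF x(2) l2_\<eta>] \<open>l2norm \<eta> = Q\<close>
      by (simp add: mult_left_mono l2norm_nonneg)
    finally have "Q * Q \<le> (C * l2norm \<xi>) * Q"
      by (simp add: mult_ac)
    moreover have "Q \<ge> 0" "C * l2norm \<xi> \<ge> 0"
      using C by (simp_all add: Q_def l2norm_nonneg)
    ultimately show "Q \<le> C * l2norm \<xi>"
      by (cases "Q = 0") (auto intro: mult_right_le_imp_le)
  qed
  then show "l2 v \<and> l2norm v \<le> C * l2norm \<xi>"
    using l2I_L2_set_bounded by blast
qed

lemma rconv_bounded_if_lconv_bounded_adj:
  assumes "lconv_bounded (adj r) C"
  shows "rconv_bounded r C"
  unfolding rconv_bounded_def conv_eq_adj_conv_adj[of _ r]
  using lconv_boundedD[OF assms, of "adj _"] by simp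

lemma LG_iff: "x \<in> LG \<longleftrightarrow> l2 x \<and> (\<exists>C. lconv_bounded x C)"
  by (simp add: LG_def lconv_bounded_def)

lemma LG_l2: "x \<in> LG \<Longrightarrow> l2 x"
  by (simp add: LG_iff)

lemma LG_lconv_bounded:
  assumes "x \<in> LG"
  obtains C where "C \<ge> 0" "lconv_bounded x C"
  using assms lconv_bounded_mono[OF _ max.cobounded1] unfolding LG_iff
  by (meson max.cobounded2)

lemma adj_LG: "x \<in> LG \<Longrightarrow> adj x \<in> LG"
  by (metis LG_iff LG_lconv_bounded l2_adj lconv_bounded_adj)

lemma LG_rconv_bounded:
  assumes "x \<in> LG"
  obtains C where "C \<ge> 0" "rconv_bounded x C"
  by (metis LG_lconv_bounded adj_LG assms rconv_bounded_if_lconv_bounded_adj)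

lemma l2_conv_LG_left: "a \<in> LG \<Longrightarrow> l2 b \<Longrightarrow> l2 (conv a b)"
  by (metis LG_lconv_bounded lconv_boundedD(1))

lemma conv_assoc_finite_support:
  fixes a b c :: "'g::group_add \<Rightarrow> complex"
  assumes a: "l2 a" and c: "l2 c" and F: "finite F" and b: "\<And>k. k \<notin> F \<Longrightarrow> b k = 0"
  shows "conv (conv a b) c g = conv a (conv b c) g"
proof -
  have a_shift: "l2 (\<lambda>k. a (k + -h))" for h
    using a l2_translate[of a "-h"] by simp
  have c_shift: "l2 (\<lambda>k. c (-k + g))"
    using c by (simp add: l2_reflect_translate)
  have c_shift2: "l2 (\<lambda>j. c (-h + (-j + g)))" for h
  proof -
    have "l2 (\<lambda>j. c (-(j + h) + g))"
      using l2_translate[of "\<lambda>k. c (-k + g)" h] c_shift by simp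
    then show ?thesis
      by (simp only: minus_add add.assoc)
  qed
  have summable1: "(\<lambda>k. a (k + -h) * c (-k + g)) summable_on UNIV" for h
    by (rule abs_summable_summable, rule l2_mult_abs_summable[OF a_shift c_shift])
  have summable2: "(\<lambda>j. a j * c (-h + (-j + g))) summable_on UNIV" for h
    by (rule abs_summable_summable, rule l2_mult_abs_summable[OF a c_shift2])
  have reindex: "(\<Sum>\<^sub>\<infinity>k. a (k + -h) * c (-k + g)) = (\<Sum>\<^sub>\<infinity>j. a j * c (-h + (-j + g)))" for h
  proof -
    have "-h + (-(k + -h) + g) = -k + g" for k
      by (simp only: minus_add minus_minus add.assoc[symmetric] left_minus add_0_left)
    then show ?thesis
      by (intro infsum_reindex_bij_witness[where j="\<lambda>k. k + -h" and i="\<lambda>j. j + h"])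
         (simp_all only: add.assoc left_minus right_minus add_0_right UNIV_I)
  qed
  have ab: "conv a b = (\<lambda>k. \<Sum>h\<in>F. a (k + -h) * b h)"
    by (rule ext, rule conv_finite_support_right[OF F b])
  have bc: "conv b c = (\<lambda>m. \<Sum>h\<in>F. b h * c (-h + m))"
    by (rule ext, rule conv_finite_support_left[OF F b])
  have "conv (conv a b) c g = (\<Sum>\<^sub>\<infinity>k. \<Sum>h\<in>F. b h * (a (k + -h) * c (-k + g)))"
    unfolding ab by (simp add: conv_def sum_distrib_left sum_distrib_right mult_ac)
  also have "\<dots> = (\<Sum>h\<in>F. b h * (\<Sum>\<^sub>\<infinity>k. a (k + -h) * c (-k + g)))"
    using summable1 by (simp add: infsum_sum[OF F] summable_on_cmult_right infsum_cmult_right')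
  also have "\<dots> = (\<Sum>h\<in>F. \<Sum>\<^sub>\<infinity>j. b h * (a j * c (-h + (-j + g))))"
    unfolding reindex by (simp add: infsum_cmult_right')
  also have "\<dots> = (\<Sum>\<^sub>\<infinity>j. \<Sum>h\<in>F. b h * (a j * c (-h + (-j + g))))"
    using summable2 by (simp add: infsum_sum[OF F] summable_on_cmult_right)
  also have "\<dots> = conv a (conv b c) g"
    unfolding bc by (simp add: conv_def sum_distrib_left sum_distrib_right mult_ac)
  finally show ?thesis .
qed

lemma norm_conv_assoc_defect_le:
  assumes A: "lconv_bounded a A" and C: "rconv_bounded c C" and l2: "l2 a" "l2 b" "l2 c"
  shows "norm (conv (conv a b) c g - conv a (conv b c) g) \<le> (A * l2norm c + l2norm a * C) * l2norm b"
proof -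
  have "norm (conv (conv a b) c g) \<le> l2norm (conv a b) * l2norm c"
    using A l2 by (intro norm_conv_le lconv_boundedD(1))
  also have "\<dots> \<le> A * l2norm b * l2norm c"
    using A l2 by (intro mult_right_mono lconv_boundedD(2) l2norm_nonneg)
  finally have left: "norm (conv (conv a b) c g) \<le> A * l2norm b * l2norm c" .
  have "norm (conv a (conv b c) g) \<le> l2norm a * l2norm (conv b c)"
    using C l2 by (intro norm_conv_le rconv_boundedD(1))
  also have "\<dots> \<le> l2norm a * (C * l2norm b)"
    using C l2 by (intro mult_left_mono rconv_boundedD(2) l2norm_nonneg)
  finally have right: "norm (conv a (conv b c) g) \<le> l2norm a * (C * l2norm b)" .
  show ?thesis
    using order_trans[OF norm_triangle_ineq4 add_mono[OF left right]] by (simp add: algebra_simps)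
qed

text \<open>Both sides are continuous in \<open>b\<close> and agree for finitely supported \<open>b\<close>.\<close>

lemma conv_assoc:
  assumes "a \<in> LG" "l2 b" "c \<in> LG"
  shows "conv (conv a b) c = conv a (conv b c)"
proof
  fix g
  obtain A where A: "A \<ge> 0" "lconv_bounded a A"
    using LG_lconv_bounded[OF assms(1)] by blast
  obtain C where C: "C \<ge> 0" "rconv_bounded c C"
    using LG_rconv_bounded[OF assms(3)] by blast
  have a: "l2 a" and c: "l2 c"
    using assms by (simp_all add: LG_l2)
  define defect where "defect b' = conv (conv a b') c g - conv a (conv b' c) g" for b'
  define K where "K = A * l2norm c + l2norm a * C + 1"
  have "K > 0"
    using A(1) C(1) by (simp add: K_def add_nonneg_pos l2norm_nonneg)
  have "norm (defect b) < e" if "e > 0" for e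
  proof -
    obtain F where F: "finite F" and tail: "l2norm (\<lambda>k. if k \<in> F then 0 else b k) < e / K"
      using l2_tail_small[OF assms(2)] \<open>e > 0\<close> \<open>K > 0\<close> by (metis divide_pos_pos)
    define b0 where "b0 = (\<lambda>k. if k \<in> F then b k else 0)"
    define b1 where "b1 = (\<lambda>k. if k \<in> F then 0 else b k)"
    have b0: "l2 b0" and b1: "l2 b1"
      unfolding b0_def b1_def using l2_restrict l2_restrict_compl assms(2) by auto
    have b_split: "b = (\<lambda>k. b0 k + b1 k)"
      by (simp add: b0_def b1_def fun_eq_iff)
    have "conv a b = (\<lambda>k. conv a b0 k + conv a b1 k)"
      by (subst b_split) (simp add: conv_add_right[OF a b0 b1] fun_eq_iff)
    moreover have "conv b c = (\<lambda>k. conv b0 c k + conv b1 c k)"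
      by (subst b_split) (simp add: conv_add_left[OF b0 b1 c] fun_eq_iff)
    ultimately have "defect b = defect b0 + defect b1"
      unfolding defect_def
      using conv_add_left[OF lconv_boundedD(1)[OF A(2) b0] lconv_boundedD(1)[OF A(2) b1] c, of g]
        conv_add_right[OF a rconv_boundedD(1)[OF C(2) b0] rconv_boundedD(1)[OF C(2) b1], of g]
      by simp
    moreover have "defect b0 = 0"
      unfolding defect_def b0_def using conv_assoc_finite_support[OF a c F] by simp
    moreover have "norm (defect b1) \<le> K * l2norm b1"
      using norm_conv_assoc_defect_le[OF A(2) C(2) a b1 c, of g] l2norm_nonneg[of b1]
      unfolding defect_def K_def by (simp add: algebra_simps)
    moreover have "K * l2norm b1 < e"
      using tail \<open>K > 0\<close> by (simp add: b1_def pos_less_divide_eq mult.commute)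
    ultimately show ?thesis
      by simp
  qed
  then have "defect b = 0"
    using zero_less_norm_iff by blast
  then show "conv (conv a b) c g = conv a (conv b c) g"
    by (simp add: defect_def)
qed

section \<open>Heights\<close>

lemma height_eq: "height \<Omega> z = (SUP \<gamma>\<in>\<Omega>. ennreal (norm (z (-\<gamma>))))"
  by (simp add: height_def tau_conv_cu)

lemma less_height_setD:
  assumes "ennreal \<delta> < height_set \<Omega> T" "z \<in> T"
  obtains \<gamma> where "\<gamma> \<in> \<Omega>" "\<delta> < norm (z (-\<gamma>))"
proof -
  have "ennreal \<delta> < height \<Omega> z"
    using assms unfolding height_set_def by (simp add: less_INF_D)
  then obtain \<gamma> where \<gamma>: "\<gamma> \<in> \<Omega>" "ennreal \<delta> < ennreal (norm (z (-\<gamma>)))"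
    unfolding height_eq less_SUP_iff by blast
  have "\<delta> < norm (z (-\<gamma>))"
    using \<gamma>(2) by (cases "\<delta> \<ge> 0") (auto simp: ennreal_less_iff intro: order.strict_trans2[OF _ norm_ge_zero])
  with \<gamma>(1) show thesis
    by (rule that)
qed

lemma height_set_geI:
  assumes "\<And>z. z \<in> T \<Longrightarrow> \<exists>\<gamma>\<in>\<Omega>. c \<le> norm (z (-\<gamma>))"
  shows "ennreal c \<le> height_set \<Omega> T"
  unfolding height_set_def height_eq
  by (rule INF_greatest) (use assms in \<open>auto intro: SUP_upper2 ennreal_leI\<close>)

lemma height_set_mono: "\<Omega> \<subseteq> \<Omega>' \<Longrightarrow> height_set \<Omega> T \<le> height_set \<Omega>' T"
  unfolding height_set_def height_def by (intro INF_superset_mono SUP_subset_mono) auto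

lemma ennreal_pos_below: "0 < h \<Longrightarrow> \<exists>\<delta>>0. ennreal \<delta> < h"
  by (metis dense ennreal_cases order_le_imp_less_or_eq order_less_asym)

lemma norm_conv_le_truncate_right:
  fixes w y :: "'g::group_add \<Rightarrow> complex"
  assumes w: "l2 w" and y: "l2 y" and F: "finite F"
  shows "norm (conv w y g) \<le> l2norm w * l2norm (\<lambda>k. if k \<in> F then 0 else y k)
                              + (\<Sum>b\<in>F. norm (w (g + -b)) * norm (y b))"
proof -
  define y0 where "y0 = (\<lambda>k. if k \<in> F then y k else 0)"
  define y1 where "y1 = (\<lambda>k. if k \<in> F then 0 else y k)"
  have "conv w y g = conv w (\<lambda>k. y1 k + y0 k) g"
    by (simp add: y0_def y1_def if_distrib cong: if_cong)
  also have "\<dots> = conv w y1 g + conv w y0 g"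
    using w y unfolding y0_def y1_def by (intro conv_add_right l2_restrict l2_restrict_compl)
  finally have "norm (conv w y g) \<le> norm (conv w y1 g) + norm (conv w y0 g)"
    by (simp add: norm_triangle_ineq)
  moreover have "norm (conv w y1 g) \<le> l2norm w * l2norm y1"
    using w y unfolding y1_def by (intro norm_conv_le l2_restrict_compl)
  moreover have "norm (conv w y0 g) \<le> (\<Sum>b\<in>F. norm (w (g + -b)) * norm (y b))"
    by (subst conv_finite_support_right[OF F]) (auto simp: y0_def norm_mult intro: order_trans[OF norm_sum])
  ultimately show ?thesis
    unfolding y1_def by linarith
qed

lemma norm_conv_le_truncate_left:
  fixes x t :: "'g::group_add \<Rightarrow> complex"
  assumes x: "l2 x" and t: "l2 t" and F: "finite F"
  shows "norm (conv x t h) \<le> l2norm (\<lambda>k. if k \<in> F then 0 else x k) * l2norm t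
                              + (\<Sum>a\<in>F. norm (x a) * norm (t (-a + h)))"
proof -
  define x0 where "x0 = (\<lambda>k. if k \<in> F then x k else 0)"
  define x1 where "x1 = (\<lambda>k. if k \<in> F then 0 else x k)"
  have "conv x t h = conv (\<lambda>k. x1 k + x0 k) t h"
    by (simp add: x0_def x1_def if_distrib cong: if_cong)
  also have "\<dots> = conv x1 t h + conv x0 t h"
    using x t unfolding x0_def x1_def by (intro conv_add_left l2_restrict l2_restrict_compl)
  finally have "norm (conv x t h) \<le> norm (conv x1 t h) + norm (conv x0 t h)"
    by (simp add: norm_triangle_ineq)
  moreover have "norm (conv x1 t h) \<le> l2norm x1 * l2norm t"
    using x t unfolding x1_def by (intro norm_conv_le l2_restrict_compl)
  moreover have "norm (conv x0 t h) \<le> (\<Sum>a\<in>F. norm (x a) * norm (t (-a + h)))"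
    by (subst conv_finite_support_left[OF F]) (auto simp: x0_def norm_mult intro: order_trans[OF norm_sum])
  ultimately show ?thesis
    unfolding x1_def by linarith
qed

text \<open>In \<open>budget\<close>, the first two summands bound the errors of truncating \<open>y\<close> to \<open>F2\<close> and \<open>x\<close>
  to \<open>F1\<close>; the last one bounds the remaining finite sum if all coefficients of \<open>t\<close> it involves
  are at most \<open>c\<close>.\<close>

lemma large_coefficient:
  fixes x t y :: "'g::group_add \<Rightarrow> complex"
  assumes l2: "l2 x" "l2 t" "l2 y" "l2 (conv x t)" and F1: "finite F1" and F2: "finite F2"
    and budget: "l2norm (conv x t) * l2norm (\<lambda>k. if k \<in> F2 then 0 else y k)
        + (l2norm (\<lambda>k. if k \<in> F1 then 0 else x k) * l2norm t + (\<Sum>a\<in>F1. norm (x a)) * c)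
          * (\<Sum>b\<in>F2. norm (y b)) \<le> \<delta>"
    and large: "\<delta> < norm (conv (conv x t) y g)"
  shows "\<exists>a\<in>F1. \<exists>b\<in>F2. c < norm (t (-a + (g + -b)))"
proof (rule ccontr)
  assume "\<not> ?thesis"
  then have small: "norm (t (-a + (g + -b))) \<le> c" if "a \<in> F1" "b \<in> F2" for a b
    using that by (simp add: not_less)
  define R where "R = l2norm (\<lambda>k. if k \<in> F1 then 0 else x k) * l2norm t + (\<Sum>a\<in>F1. norm (x a)) * c"
  have "norm (conv x t (g + -b)) \<le> R" if "b \<in> F2" for b
  proof -
    have "(\<Sum>a\<in>F1. norm (x a) * norm (t (-a + (g + -b)))) \<le> (\<Sum>a\<in>F1. norm (x a)) * c"
      unfolding sum_distrib_right using small that by (intro sum_mono mult_left_mono) auto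
    then show ?thesis
      using norm_conv_le_truncate_left[OF l2(1,2) F1, of "g + -b"] unfolding R_def by linarith
  qed
  then have "(\<Sum>b\<in>F2. norm (conv x t (g + -b)) * norm (y b)) \<le> (\<Sum>b\<in>F2. R * norm (y b))"
    by (intro sum_mono mult_right_mono) auto
  then show False
    using norm_conv_le_truncate_right[OF l2(4) l2(3) F2, of g] budget large
    unfolding R_def sum_distrib_left[symmetric] by linarith
qed

lemma mult_le_if_le_divide_plus_one:
  fixes p q M d :: real
  assumes "0 \<le> p" "p \<le> M" "0 \<le> q" "q \<le> d / (M + 1)"
  shows "p * q \<le> d"
proof -
  have "M + 1 > 0"
    using assms(1,2) by linarith
  have "p * q \<le> M * (d / (M + 1))"
    using assms by (intro mult_mono) auto
  moreover have "0 \<le> d / (M + 1)"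
    using assms(3,4) by linarith
  then have "d \<ge> 0"
    using \<open>M + 1 > 0\<close> by (simp add: zero_le_divide_iff)
  moreover have "M * (d / (M + 1)) \<le> d"
    using \<open>M + 1 > 0\<close> \<open>d \<ge> 0\<close> by (simp add: field_simps)
  ultimately show ?thesis
    by linarith
qed

lemma large_coefficient_of_truncations:
  fixes x t y :: "'g::group_add \<Rightarrow> complex"
  assumes x: "l2 x" "lconv_bounded x Cx" "Cx \<ge> 0" and t: "l2 t" "l2norm t \<le> B" and y: "l2 y"
    and F1: "finite F1" and F2: "finite F2"
    and y_tail: "l2norm (\<lambda>k. if k \<in> F2 then 0 else y k) \<le> \<epsilon> / (Cx * B + 1)"
    and x_tail: "l2norm (\<lambda>k. if k \<in> F1 then 0 else x k) \<le> \<epsilon> / (B * (\<Sum>b\<in>F2. norm (y b)) + 1)"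
    and large: "3 * \<epsilon> < norm (conv (conv x t) y g)"
  shows "\<exists>a\<in>F1. \<exists>b\<in>F2. \<epsilon> / ((\<Sum>a\<in>F1. norm (x a)) * (\<Sum>b\<in>F2. norm (y b)) + 1)
                          < norm (t (-a + (g + -b)))"
proof -
  define X where "X = (\<Sum>a\<in>F1. norm (x a))"
  define Y where "Y = (\<Sum>b\<in>F2. norm (y b))"
  define c where "c = \<epsilon> / (X * Y + 1)"
  have XY: "X \<ge> 0" "Y \<ge> 0"
    by (simp_all add: X_def Y_def sum_nonneg)
  have "B \<ge> 0"
    using t(2) l2norm_nonneg order_trans by blast
  have xt: "l2 (conv x t)" "l2norm (conv x t) \<le> Cx * B"
    using lconv_boundedD[OF x(2) t(1)] mult_left_mono[OF t(2) x(3)] by auto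
  have "0 \<le> \<epsilon> / (Cx * B + 1)"
    using y_tail l2norm_nonneg order_trans by blast
  then have "\<epsilon> \<ge> 0"
    using mult_nonneg_nonneg[OF x(3) \<open>B \<ge> 0\<close>] by (auto simp: zero_le_divide_iff)
  have "l2norm (conv x t) * l2norm (\<lambda>k. if k \<in> F2 then 0 else y k) \<le> \<epsilon>"
    using xt y_tail by (intro mult_le_if_le_divide_plus_one l2norm_nonneg) auto
  moreover have "l2norm t * Y * l2norm (\<lambda>k. if k \<in> F1 then 0 else x k) \<le> \<epsilon>"
    using t x_tail XY unfolding Y_def[symmetric]
    by (intro mult_le_if_le_divide_plus_one[where M="B * Y"] mult_right_mono l2norm_nonneg mult_nonneg_nonneg) auto
  moreover have "X * Y * c \<le> \<epsilon>"
    by (rule mult_le_if_le_divide_plus_one[where M="X * Y"]) (use XY \<open>\<epsilon> \<ge> 0\<close> in \<open>auto simp: c_def\<close>)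
  ultimately show ?thesis
    using large_coefficient[OF x(1) t(1) y xt(1) F1 F2, of c "3 * \<epsilon>" g] large
    unfolding c_def X_def Y_def by (auto simp: algebra_simps)
qed

definition l2_bounded :: "('a \<Rightarrow> complex) set \<Rightarrow> bool" where
  "l2_bounded S \<longleftrightarrow> (\<exists>B. \<forall>s\<in>S. l2 s \<and> l2norm s \<le> B)"

lemma height_set_FSF_pos_of_sandwich:
  fixes \<Sigma> :: "'g::group_add set"
  assumes x: "x \<in> LG" and y: "l2 y" and S: "l2_bounded S"
    and pos: "height_set \<Sigma> (sandwich x S y) > 0"
  shows "\<exists>F. finite F \<and> height_set (FSF F \<Sigma>) S > 0"
proof -
  obtain B where B: "B \<ge> 0" "\<And>t. t \<in> S \<Longrightarrow> l2 t \<and> l2norm t \<le> B"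
    using S unfolding l2_bounded_def by (meson max.cobounded1 max.cobounded2 order_trans)
  obtain Cx where Cx: "Cx \<ge> 0" "lconv_bounded x Cx"
    using LG_lconv_bounded[OF x] by blast
  obtain \<delta> where "\<delta> > 0" and \<delta>: "ennreal \<delta> < height_set \<Sigma> (sandwich x S y)"
    using ennreal_pos_below[OF pos] by blast
  define \<epsilon> where "\<epsilon> = \<delta> / 3"
  have "\<epsilon> > 0"
    using \<open>\<delta> > 0\<close> by (simp add: \<epsilon>_def)
  obtain F2 where F2: "finite F2"
    and y_tail: "l2norm (\<lambda>k. if k \<in> F2 then 0 else y k) < \<epsilon> / (Cx * B + 1)"
    using l2_tail_small[OF y] \<open>\<epsilon> > 0\<close> B(1) Cx(1)
    by (metis add_nonneg_pos divide_pos_pos mult_nonneg_nonneg zero_less_one)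
  obtain F1 where F1: "finite F1"
    and x_tail: "l2norm (\<lambda>k. if k \<in> F1 then 0 else x k) < \<epsilon> / (B * (\<Sum>b\<in>F2. norm (y b)) + 1)"
    using l2_tail_small[OF LG_l2[OF x]] \<open>\<epsilon> > 0\<close> B(1)
    by (metis add_nonneg_pos divide_pos_pos mult_nonneg_nonneg norm_ge_zero sum_nonneg zero_less_one)
  define c where "c = \<epsilon> / ((\<Sum>a\<in>F1. norm (x a)) * (\<Sum>b\<in>F2. norm (y b)) + 1)"
  have "c > 0"
    using \<open>\<epsilon> > 0\<close> by (simp add: c_def add_nonneg_pos sum_nonneg)
  have "\<exists>\<gamma>'\<in>FSF (F1 \<union> F2) \<Sigma>. c \<le> norm (t (-\<gamma>'))" if t: "t \<in> S" for t
  proof -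
    have "conv (conv x t) y \<in> sandwich x S y"
      using t by (simp add: sandwich_def)
    with \<delta> obtain \<gamma> where \<gamma>: "\<gamma> \<in> \<Sigma>" "3 * \<epsilon> < norm (conv (conv x t) y (-\<gamma>))"
      unfolding \<epsilon>_def by (auto elim: less_height_setD)
    then obtain a b where ab: "a \<in> F1" "b \<in> F2" "c < norm (t (-a + (-\<gamma> + -b)))"
      using large_coefficient_of_truncations[OF LG_l2[OF x] Cx(2,1) _ _ y F1 F2
          less_imp_le[OF y_tail] less_imp_le[OF x_tail]] B(2)[OF t]
      unfolding c_def by blast
    have "b + \<gamma> + a \<in> FSF (F1 \<union> F2) \<Sigma>"
      unfolding FSF_def using ab \<gamma>(1) by blast
    moreover have "-(b + \<gamma> + a) = -a + (-\<gamma> + -b)"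
      by (simp only: minus_add add.assoc)
    ultimately show ?thesis
      using ab(3) by (metis less_imp_le)
  qed
  then have "ennreal c \<le> height_set (FSF (F1 \<union> F2) \<Sigma>) S"
    by (rule height_set_geI)
  then have "height_set (FSF (F1 \<union> F2) \<Sigma>) S > 0"
    using \<open>c > 0\<close> by (metis ennreal_eq_0_iff not_gr_zero not_le order_antisym zero_le)
  then show ?thesis
    using F1 F2 by blast
qed

lemma height_UNIV_pos_of_sandwich:
  assumes "x \<in> LG" "y \<in> LG" "l2_bounded S" "height_set UNIV (sandwich x S y) > 0"
  shows "height_set UNIV S > 0"
proof -
  obtain F where "height_set (FSF F UNIV) S > 0"
    using height_set_FSF_pos_of_sandwich[OF assms(1) LG_l2[OF assms(2)] assms(3,4)] by blast
  then show ?thesis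
    using height_set_mono[of "FSF F UNIV" UNIV S] by simp
qed

section \<open>Unit ball and unitaries\<close>

lemma LG_ball_l2_bounded:
  assumes "S \<subseteq> LG_ball"
  shows "l2_bounded S"
proof -
  have "l2 t \<and> l2norm t \<le> 1" if "t \<in> LG_ball" for t :: "'a \<Rightarrow> complex"
  proof -
    have "t \<in> LG" and contraction: "\<forall>\<xi>. l2 \<xi> \<longrightarrow> l2norm (conv t \<xi>) \<le> l2norm \<xi>"
      using that by (simp_all add: LG_ball_def)
    show ?thesis
      using contraction[rule_format, OF l2_cu[of 0]] \<open>t \<in> LG\<close> by (simp add: LG_l2 l2norm_cu)
  qed
  then show ?thesis
    using assms unfolding l2_bounded_def by blast
qed

lemma l2_bounded_sandwich:
  assumes "x \<in> LG" "y \<in> LG" "l2_bounded S"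
  shows "l2_bounded (sandwich x S y)"
proof -
  obtain B where B: "\<And>s. s \<in> S \<Longrightarrow> l2 s \<and> l2norm s \<le> B"
    using assms(3) unfolding l2_bounded_def by blast
  obtain Cx where Cx: "Cx \<ge> 0" "lconv_bounded x Cx"
    using LG_lconv_bounded[OF assms(1)] by blast
  obtain Cy where Cy: "Cy \<ge> 0" "rconv_bounded y Cy"
    using LG_rconv_bounded[OF assms(2)] by blast
  have "l2 (conv (conv x s) y) \<and> l2norm (conv (conv x s) y) \<le> Cy * (Cx * B)" if "s \<in> S" for s
  proof -
    have xs: "l2 (conv x s)" "l2norm (conv x s) \<le> Cx * B"
      using B[OF that] lconv_boundedD[OF Cx(2), of s] mult_left_mono[OF _ Cx(1), of "l2norm s" B] by auto
    then show ?thesis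
      using rconv_boundedD[OF Cy(2) xs(1)] mult_left_mono[OF xs(2) Cy(1)] by auto
  qed
  then show ?thesis
    unfolding l2_bounded_def sandwich_def by blast
qed

lemma sandwich_unitary_cancel:
  assumes u: "unitary_LG u" and S: "S \<subseteq> LG"
  shows "sandwich (adj u) (sandwich u S (adj u)) u = S"
proof -
  have LG: "u \<in> LG" "adj u \<in> LG" and unitary: "conv (adj u) u = cu 0"
    using u adj_LG unfolding unitary_LG_def by blast+
  have "conv (conv (adj u) (conv (conv u s) (adj u))) u = s" if s: "s \<in> LG" for s
  proof -
    have "conv (adj u) (conv (conv u s) (adj u)) = conv (conv (adj u) (conv u s)) (adj u)"
      using LG s by (intro conv_assoc[symmetric] l2_conv_LG_left LG_l2)
    also have "conv (adj u) (conv u s) = s"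
      using conv_assoc[OF LG(2) LG_l2[OF LG(1)] s] unitary by simp
    finally have "conv (adj u) (conv (conv u s) (adj u)) = conv s (adj u)" .
    moreover have "conv (conv s (adj u)) u = conv s (conv (adj u) u)"
      using LG s by (intro conv_assoc LG_l2)
    ultimately show ?thesis
      using unitary by simp
  qed
  then have "sandwich (adj u) (sandwich u S (adj u)) u = id ` S"
    unfolding sandwich_def image_image using S by (intro image_cong) auto
  then show ?thesis
    by simp
qed

lemma height_UNIV_pos_iff_unitary_conj:
  assumes u: "unitary_LG u" and S: "l2_bounded S" "S \<subseteq> LG"
  shows "height_set UNIV S > 0 \<longleftrightarrow> height_set UNIV (sandwich u S (adj u)) > 0"
proof -
  have LG: "u \<in> LG" "adj u \<in> LG"
    using u adj_LG unfolding unitary_LG_def by blast+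
  show ?thesis
  proof
    assume "height_set UNIV S > 0"
    then have "height_set UNIV (sandwich (adj u) (sandwich u S (adj u)) u) > 0"
      by (simp add: sandwich_unitary_cancel[OF u S(2)])
    then show "height_set UNIV (sandwich u S (adj u)) > 0"
      by (rule height_UNIV_pos_of_sandwich[OF LG(2,1) l2_bounded_sandwich[OF LG S(1)]])
  next
    assume "height_set UNIV (sandwich u S (adj u)) > 0"
    then show "height_set UNIV S > 0"
      by (rule height_UNIV_pos_of_sandwich[OF LG S(1)])
  qed
qed

theorem lemma2p4:
  fixes \<Sigma> :: "'g::{group_add, countable} set"
    and S :: "('g \<Rightarrow> complex) set"
  assumes "S \<subseteq> LG_ball"
  shows "((\<exists>x\<in>LG. \<exists>y\<in>LG. height_set \<Sigma> (sandwich x S y) > 0)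
            \<longrightarrow> (\<exists>F. finite F \<and> height_set (FSF F \<Sigma>) S > 0))
       \<and> (\<forall>u. unitary_LG u \<longrightarrow>
            (height_set UNIV S > 0 \<longleftrightarrow> height_set UNIV (sandwich u S (adj u)) > 0))"
proof -
  have S: "l2_bounded S" "S \<subseteq> LG"
    using LG_ball_l2_bounded[OF assms] assms unfolding LG_ball_def by auto
  then show ?thesis
    using height_set_FSF_pos_of_sandwich[OF _ LG_l2 S(1)] height_UNIV_pos_iff_unitary_conj
    by blast
qed

end
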